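(* Let $v:2^N\to\mathbb{R}_+$ be a gross substitutes valuation over a finite set $N$. Let $A,B\subseteq N$ be disjoint and $j\in N\setminus(A\cup B)$. Assume that $v(\{i\}\mid A\cup\{j\})=0$ for all $i\in B$ and that $0\le v(\{j\}\mid A)-x<v(B\mid A)$ for some $x\ge0$. Then there is $i\in B$ such that $v(\{j\}\mid A)-x<v(\{i\}\mid A)$.
   Context: Valuations are monotone functions $v:2^N\to\mathbb{R}_+$ with $v(\emptyset)=0$, $N=[n]$. Marginal value: $v(T\mid S)=v(S\cup T)-v(S)$. For a price vector $p\in\mathbb{R}^n_+$, $p(S)=\sum_{j\in S}p_j$ and $D(v;p)=\arg\max_{S\subseteq N}(v(S)-p(S))$. The valuation $v$ is gross substitutes if for every price vector $p$, every $S\in D(v;p)$ and every price vector $p'\ge p$ (coordinatewise), there is $T\in D(v;p')$ with $S\cap\{j: p_j=p'_j\}\subseteq T$. *)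

theory Defs
  imports Complex_Main
begin

definition valuation :: "'a set \<Rightarrow> ('a set \<Rightarrow> real) \<Rightarrow> bool" where
  "valuation N v \<longleftrightarrow> v {} = 0 \<and> (\<forall>S. S \<subseteq> N \<longrightarrow> v S \<ge> 0)
     \<and> (\<forall>S T. S \<subseteq> T \<and> T \<subseteq> N \<longrightarrow> v S \<le> v T)"

definition marg :: "('a set \<Rightarrow> real) \<Rightarrow> 'a set \<Rightarrow> 'a set \<Rightarrow> real" where
  "marg v T S = v (S \<union> T) - v S"

definition price :: "('a \<Rightarrow> real) \<Rightarrow> 'a set \<Rightarrow> real" where
  "price p S = (\<Sum>j\<in>S. p j)"

definition demand :: "'a set \<Rightarrow> ('a set \<Rightarrow> real) \<Rightarrow> ('a \<Rightarrow> real) \<Rightarrow> 'a set set" where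
  "demand N v p = {S. S \<subseteq> N \<and> (\<forall>T. T \<subseteq> N \<longrightarrow> v T - price p T \<le> v S - price p S)}"

definition gross_substitutes :: "'a set \<Rightarrow> ('a set \<Rightarrow> real) \<Rightarrow> bool" where
  "gross_substitutes N v \<longleftrightarrow>
     (\<forall>p p' S. (\<forall>j\<in>N. 0 \<le> p j \<and> p j \<le> p' j) \<longrightarrow> S \<in> demand N v p \<longrightarrow>
        (\<exists>T\<in>demand N v p'. S \<inter> {j\<in>N. p j = p' j} \<subseteq> T))"

end

theory Submission
  imports Defs
begin

text \<open>Suppose every \<open>i \<in> B\<close> had \<open>v({i} | A) \<le> d\<close>, where \<open>d = v({j} | A) - x\<close>. Price \<open>A\<close> at 0,
  \<open>B\<close> at a tiny \<open>\<epsilon> > 0\<close>, \<open>j\<close> at \<open>x\<close> and everything else prohibitively. Since \<open>v(B | A) > d\<close>, the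
  bundle \<open>A \<union> B\<close> beats every bundle inside \<open>A \<union> {j}\<close>, so a demanded set contains some \<open>i \<in> B\<close>.
  Now make \<open>B - {i}\<close> prohibitive; by gross substitutability \<open>i\<close> stays demanded. But \<open>i\<close> is
  worthless next to \<open>A \<union> {j}\<close>, and without \<open>j\<close> it adds at most \<open>d\<close> to \<open>A\<close>, so paying \<open>\<epsilon>\<close> for
  it is worse than buying \<open>A \<union> {j}\<close>.\<close>

lemma valuation_mono: "valuation N v \<Longrightarrow> S \<subseteq> T \<Longrightarrow> T \<subseteq> N \<Longrightarrow> v S \<le> v T"
  unfolding valuation_def by blast

lemma valuation_nonneg: "valuation N v \<Longrightarrow> S \<subseteq> N \<Longrightarrow> 0 \<le> v S"
  unfolding valuation_def by blast

lemma price_mono: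
  assumes "finite T" "S \<subseteq> T" "\<forall>k\<in>T. 0 \<le> p k"
  shows "price p S \<le> price p T"
  unfolding price_def using assms by (intro sum_mono2) auto

lemma price_nonneg: "\<forall>k\<in>S. 0 \<le> p k \<Longrightarrow> 0 \<le> price p S"
  unfolding price_def by (simp add: sum_nonneg)

lemma demand_exists:
  assumes "finite N"
  shows "\<exists>S. S \<in> demand N v p"
proof -
  let ?u = "\<lambda>S. v S - price p S"
  have fin: "finite (?u ` Pow N)" using assms by simp
  have "Max (?u ` Pow N) \<in> ?u ` Pow N" using Max_in[OF fin] by blast
  then obtain S where S: "S \<in> Pow N" "?u S = Max (?u ` Pow N)" by auto
  have "\<forall>T. T \<subseteq> N \<longrightarrow> ?u T \<le> ?u S" using S Max_ge[OF fin] by auto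
  then show ?thesis using S unfolding demand_def by auto
qed

lemma demand_subset_if_prohibitive:
  assumes "finite N" "valuation N v" "\<forall>k\<in>N. 0 \<le> p k" "S \<in> demand N v p"
    and "\<forall>k\<in>N - C. v N < p k"
  shows "S \<subseteq> C"
proof
  fix k assume "k \<in> S"
  have SN: "S \<subseteq> N" and opt: "v {} - price p {} \<le> v S - price p S"
    using assms(4) unfolding demand_def by auto
  have "p k = price p {k}" unfolding price_def by simp
  also have "\<dots> \<le> price p S"
    using \<open>k \<in> S\<close> SN assms(1,3) by (intro price_mono) (auto intro: finite_subset)
  also have "\<dots> \<le> v S" using opt assms(2) unfolding valuation_def price_def by simp
  also have "\<dots> \<le> v N" using valuation_mono[OF assms(2) SN] by simp
  finally show "k \<in> C" using \<open>k \<in> S\<close> SN assms(5) by force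
qed

lemma demand_meets_cheap_set:
  assumes "finite N" "valuation N v" "A \<subseteq> N" "B \<subseteq> N" "A \<inter> B = {}" "j \<in> N"
    and "\<forall>k\<in>N. 0 \<le> p k" "\<forall>k\<in>A. p k = 0" "\<forall>k\<in>B. p k \<le> \<epsilon>" "p j = x"
    and "\<forall>k\<in>N - (A \<union> B \<union> {j}). v N < p k"
    and "0 \<le> marg v {j} A - x" "\<epsilon> * card B < marg v B A - (marg v {j} A - x)"
    and "S \<in> demand N v p"
  shows "S \<inter> B \<noteq> {}"
proof
  assume "S \<inter> B = {}"
  have SN: "S \<subseteq> N" and opt: "v (A \<union> B) - price p (A \<union> B) \<le> v S - price p S"
    using assms(3,4,14) unfolding demand_def by auto
  have "S \<subseteq> A \<union> B \<union> {j}"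
    using demand_subset_if_prohibitive[OF assms(1,2,7,14,11)] .
  then have SAj: "S \<subseteq> A \<union> {j}" using \<open>S \<inter> B = {}\<close> by blast
  have "price p (A \<union> B) = price p A + price p B"
    unfolding price_def using assms(1,3,4,5) by (intro sum.union_disjoint) (auto intro: finite_subset)
  also have "\<dots> \<le> \<epsilon> * card B"
    using assms(8,9) sum_bounded_above[of B p \<epsilon>] unfolding price_def by (simp add: mult.commute)
  finally have "v A + (marg v {j} A - x) < v S - price p S"
    using opt assms(13) unfolding marg_def by (simp add: Un_commute)
  moreover have "v S - price p S \<le> v A + (marg v {j} A - x)"
  proof (cases "j \<in> S")
    case True
    have "p j \<le> price p S"
      using price_mono[of S "{j}" p] True SN assms(1,7) by (auto simp: price_def intro: finite_subset)
    moreover have "v S \<le> v (A \<union> {j})" using SAj assms(3,6) by (intro valuation_mono[OF assms(2)]) auto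
    ultimately show ?thesis using assms(10) unfolding marg_def by (simp add: Un_commute)
  next
    case False
    have "0 \<le> price p S" using SN assms(7) by (intro price_nonneg) auto
    moreover have "v S \<le> v A" using SAj False assms(3) by (intro valuation_mono[OF assms(2)]) auto
    ultimately show ?thesis using assms(12) by simp
  qed
  ultimately show False by simp
qed

lemma marg_gt_if_demanded:
  assumes "finite N" "valuation N v" "A \<subseteq> N" "i \<in> N" "j \<in> N" "i \<noteq> j" "j \<notin> A"
    and "\<forall>k\<in>N. 0 \<le> q k" "\<forall>k\<in>A. q k = 0" "q i = \<epsilon>" "q j = x" "0 < \<epsilon>"
    and "\<forall>k\<in>N - (A \<union> {i, j}). v N < q k"
    and "marg v {i} (A \<union> {j}) = 0"
    and "T \<in> demand N v q" "i \<in> T"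
  shows "marg v {j} A - x < marg v {i} A"
proof -
  have TN: "T \<subseteq> N" and opt: "v (A \<union> {j}) - price q (A \<union> {j}) \<le> v T - price q T"
    using assms(3,5,15) unfolding demand_def by auto
  have finT: "finite T" using TN assms(1) by (rule finite_subset)
  have "price q (A \<union> {j}) = price q A + q j"
    unfolding price_def using assms(1,3,7) by (simp add: finite_subset)
  then have price_Aj: "price q (A \<union> {j}) = x" using assms(9,11) by (simp add: price_def)
  have TAij: "T \<subseteq> A \<union> {i, j}"
    using demand_subset_if_prohibitive[OF assms(1,2,8,15,13)] .
  have "j \<notin> T"
  proof
    assume "j \<in> T"
    have "\<epsilon> + x = price q {i, j}" using assms(6,10,11) by (simp add: price_def)
    also have "\<dots> \<le> price q T"
      using \<open>j \<in> T\<close> assms(16) finT TN assms(8) by (intro price_mono) auto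
    finally have "\<epsilon> + x \<le> price q T" .
    moreover have "v T \<le> v (A \<union> {i, j})"
      using TAij assms(3,4,5) by (intro valuation_mono[OF assms(2)]) auto
    moreover have "A \<union> {i, j} = (A \<union> {j}) \<union> {i}" by auto
    ultimately show False using opt price_Aj assms(12,14) unfolding marg_def by simp
  qed
  have "\<epsilon> = price q {i}" using assms(10) by (simp add: price_def)
  also have "\<dots> \<le> price q T" using assms(16) finT TN assms(8) by (intro price_mono) auto
  finally have "\<epsilon> \<le> price q T" .
  moreover have "v T \<le> v (A \<union> {i})"
    using TAij \<open>j \<notin> T\<close> assms(3,4) by (intro valuation_mono[OF assms(2)]) auto
  ultimately show ?thesis using opt price_Aj assms(12) unfolding marg_def by (simp add: Un_commute)
qed

lemma exists_pos_mult_less: "0 < (\<Delta>::real) \<Longrightarrow> \<exists>\<epsilon>>0. \<epsilon> * real n < \<Delta>"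
  by (intro exI[of _ "\<Delta> / (real n + 1)"]) (auto simp: field_simps)

theorem mainTheorem8:
  fixes N :: "'a set" and v :: "'a set \<Rightarrow> real" and A B :: "'a set" and j :: 'a and x :: real
  assumes "finite N"
    and "valuation N v"
    and "gross_substitutes N v"
    and "A \<subseteq> N" and "B \<subseteq> N" and "A \<inter> B = {}"
    and "j \<in> N - (A \<union> B)"
    and "\<forall>i\<in>B. marg v {i} (A \<union> {j}) = 0"
    and "x \<ge> 0"
    and "0 \<le> marg v {j} A - x"
    and "marg v {j} A - x < marg v B A"
  shows "\<exists>i\<in>B. marg v {j} A - x < marg v {i} A"
proof -
  obtain \<epsilon> :: real where \<epsilon>: "0 < \<epsilon>" "\<epsilon> * card B < marg v B A - (marg v {j} A - x)"
    using exists_pos_mult_less[of _ "card B"] assms(11) by (metis diff_gt_0_iff_gt)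
  define H where "H = v N + 1"
  have H: "v N < H" "0 < H" using valuation_nonneg[OF assms(2), of N] unfolding H_def by auto
  define p where "p k = (if k \<in> A then 0 else if k \<in> B then \<epsilon> else if k = j then x else H)" for k
  obtain S where S: "S \<in> demand N v p" using demand_exists[OF assms(1)] by blast
  have "S \<inter> B \<noteq> {}"
    using assms(6,7,9) \<epsilon> H
    by (intro demand_meets_cheap_set[OF assms(1,2,4,5,6) _ _ _ _ _ _ assms(10) _ S])
       (auto simp: p_def)
  then obtain i where i: "i \<in> S" "i \<in> B" by blast
  define q where "q k = (if k \<in> B - {i} then p k + H else p k)" for k
  have "\<forall>k\<in>N. 0 \<le> p k \<and> p k \<le> q k" using assms(9) \<epsilon> H unfolding q_def p_def by auto
  then obtain T where T: "T \<in> demand N v q" and "S \<inter> {k\<in>N. p k = q k} \<subseteq> T"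
    using assms(3) S unfolding gross_substitutes_def by blast
  then have "i \<in> T" using i S unfolding q_def demand_def by auto
  then have "marg v {j} A - x < marg v {i} A"
    using i assms(4-9) \<epsilon> H
    by (intro marg_gt_if_demanded[where \<epsilon> = \<epsilon>, OF assms(1,2,4) _ _ _ _ _ _ _ _ _ _ _ T])
       (auto simp: q_def p_def)
  with i show ?thesis by blast
qed

end
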